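(* Let $G$ be a graph and $k\ge\Delta(G)$. If every block of $G$ is strongly $k$-edge-orientable, then $G$ is strongly $k$-edge-orientable.
   Context: All graphs are simple. A block is a maximal $2$-connected subgraph. An orientation of a graph $H$ is any digraph obtained by replacing each edge $uv$ with the arc $(u,v)$, with the arc $(v,u)$, or with both arcs. A kernel of a digraph $D$ is an independent set $S$ such that every vertex of $D-S$ has an out-neighbor in $S$. $D$ is kernel-perfect if every induced subdigraph of $D$ has a kernel. For $f:V(H)\to\mathbb{N}$, an orientation $D$ of $H$ is $f$-kernel-perfect if it is kernel-perfect and $f(v)\ge 1+d^+_D(v)$ for all $v$. For $f:E(G)\to\mathbb{N}$, $G$ is $f$-edge-orientable if its line graph $L(G)$ admits an $f$-kernel-perfect orientation. For $v\in V(G)$, define $f_{k,v}:E(G)\to\mathbb{N}$ by $f_{k,v}(e)=d_G(v)$ if $e$ is incident to $v$, and $f_{k,v}(e)=k$ otherwise. $G$ is strongly $k$-edge-orientable if $G$ is $f_{k,v}$-edge-orientable for every $v\in V(G)$. *)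

theory Defs
  imports Main
begin

definition simple_graph :: "'a set \<Rightarrow> 'a set set \<Rightarrow> bool" where
  "simple_graph V E \<longleftrightarrow> finite V \<and> (\<forall>e\<in>E. e \<subseteq> V \<and> card e = 2)"

definition degree :: "'a set set \<Rightarrow> 'a \<Rightarrow> nat" where
  "degree E v = card {e\<in>E. v \<in> e}"

definition max_degree_le :: "'a set \<Rightarrow> 'a set set \<Rightarrow> nat \<Rightarrow> bool" where
  "max_degree_le V E k \<longleftrightarrow> (\<forall>v\<in>V. degree E v \<le> k)"

definition subgraph :: "'a set \<Rightarrow> 'a set set \<Rightarrow> 'a set \<Rightarrow> 'a set set \<Rightarrow> bool" where
  "subgraph V' E' V E \<longleftrightarrow> V' \<subseteq> V \<and> E' \<subseteq> E \<and> (\<forall>e\<in>E'. e \<subseteq> V')"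

definition connected_graph :: "'a set \<Rightarrow> 'a set set \<Rightarrow> bool" where
  "connected_graph V E \<longleftrightarrow> V \<noteq> {} \<and>
     (\<forall>x\<in>V. \<forall>y\<in>V. (\<lambda>a b. a \<in> V \<and> b \<in> V \<and> {a, b} \<in> E)\<^sup>*\<^sup>* x y)"

(* G - v is connected (the empty graph counts as connected here) *)
definition no_cut_vertex :: "'a set \<Rightarrow> 'a set set \<Rightarrow> bool" where
  "no_cut_vertex V E \<longleftrightarrow> (\<forall>v\<in>V. V - {v} = {} \<or> connected_graph (V - {v}) {e\<in>E. v \<notin> e})"

(* Block: maximal connected subgraph without a cut vertex
   (2-connected subgraphs, bridges K2, isolated vertices K1). *)
definition is_block :: "'a set \<Rightarrow> 'a set set \<Rightarrow> 'a set \<Rightarrow> 'a set set \<Rightarrow> bool" where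
  "is_block V E B EB \<longleftrightarrow> subgraph B EB V E \<and> connected_graph B EB \<and> no_cut_vertex B EB \<and>
     (\<forall>B' EB'. subgraph B' EB' V E \<and> B \<subseteq> B' \<and> EB \<subseteq> EB' \<and> connected_graph B' EB'
        \<and> no_cut_vertex B' EB' \<longrightarrow> B' = B \<and> EB' = EB)"

definition line_adj :: "'a set set \<Rightarrow> 'a set \<Rightarrow> 'a set \<Rightarrow> bool" where
  "line_adj E e e' \<longleftrightarrow> e \<in> E \<and> e' \<in> E \<and> e \<noteq> e' \<and> e \<inter> e' \<noteq> {}"

definition is_orientation :: "'b set \<Rightarrow> ('b \<Rightarrow> 'b \<Rightarrow> bool) \<Rightarrow> ('b \<times> 'b) set \<Rightarrow> bool" where
  "is_orientation X adj D \<longleftrightarrow>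
     (\<forall>(u, v)\<in>D. u \<in> X \<and> v \<in> X \<and> adj u v) \<and>
     (\<forall>u\<in>X. \<forall>v\<in>X. adj u v \<longrightarrow> (u, v) \<in> D \<or> (v, u) \<in> D)"

definition is_kernel_of :: "('b \<times> 'b) set \<Rightarrow> 'b set \<Rightarrow> 'b set \<Rightarrow> bool" where
  "is_kernel_of D Y S \<longleftrightarrow> S \<subseteq> Y \<and> (\<forall>x\<in>S. \<forall>y\<in>S. (x, y) \<notin> D) \<and>
     (\<forall>x\<in>Y - S. \<exists>y\<in>S. (x, y) \<in> D)"

definition kernel_perfect :: "'b set \<Rightarrow> ('b \<times> 'b) set \<Rightarrow> bool" where
  "kernel_perfect X D \<longleftrightarrow> (\<forall>Y\<subseteq>X. \<exists>S. is_kernel_of D Y S)"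

definition out_degree :: "('b \<times> 'b) set \<Rightarrow> 'b \<Rightarrow> nat" where
  "out_degree D v = card {u. (v, u) \<in> D}"

definition f_kernel_perfect_orientation ::
    "'b set \<Rightarrow> ('b \<Rightarrow> 'b \<Rightarrow> bool) \<Rightarrow> ('b \<Rightarrow> nat) \<Rightarrow> ('b \<times> 'b) set \<Rightarrow> bool" where
  "f_kernel_perfect_orientation X adj f D \<longleftrightarrow> is_orientation X adj D \<and> kernel_perfect X D \<and>
     (\<forall>v\<in>X. f v \<ge> 1 + out_degree D v)"

definition f_edge_orientable :: "'a set set \<Rightarrow> ('a set \<Rightarrow> nat) \<Rightarrow> bool" where
  "f_edge_orientable E f \<longleftrightarrow> (\<exists>D. f_kernel_perfect_orientation E (line_adj E) f D)"

definition f_kv :: "'a set set \<Rightarrow> nat \<Rightarrow> 'a \<Rightarrow> 'a set \<Rightarrow> nat" where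
  "f_kv E k v e = (if v \<in> e then degree E v else k)"

definition strongly_k_edge_orientable :: "'a set \<Rightarrow> 'a set set \<Rightarrow> nat \<Rightarrow> bool" where
  "strongly_k_edge_orientable V E k \<longleftrightarrow> (\<forall>v\<in>V. f_edge_orientable E (f_kv E k v))"

end

theory Submission imports Defs begin

text \<open>A graph that is not itself a block splits as
G = G1 \<union> G2 with V(G1) \<inter> V(G2) \<subseteq> {c}; the blocks of the sides that have an edge are blocks
of G, so both sides are strongly k-edge-orientable. For v in G1, take an orientation of L(G1) for
the prescription at v and one of L(G2) for the prescription at c, and let every edge of G2 at c
point to every edge of G1 at c. A kernel of an induced subdigraph is obtained by first choosing one
on the G1-side and then one on the G2-side, avoiding the edges at c whenever these are already
absorbed. The new arcs raise the out-degree of an edge of G2 at c by d_G1(c), which is exactly the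
gap between its bound d_G2(c) and d_G(c) \<le> f(e); here k \<ge> \<Delta>(G) is used when v \<noteq> c.\<close>

section \<open>Gluing kernel-perfect orientations\<close>

text \<open>If the kernel S1 on the X1-side meets C1, every vertex of C2 is already absorbed, so the
X2-side kernel is chosen outside C2; otherwise no new arc can join S1 and S2.\<close>

lemma kernel_perfect_join:
  assumes kp1: "kernel_perfect X1 D1" and kp2: "kernel_perfect X2 D2"
    and D1: "D1 \<subseteq> X1 \<times> X1" and D2: "D2 \<subseteq> X2 \<times> X2"
    and disj: "X1 \<inter> X2 = {}" and C1: "C1 \<subseteq> X1" and C2: "C2 \<subseteq> X2"
  shows "kernel_perfect (X1 \<union> X2) (D1 \<union> D2 \<union> C2 \<times> C1)"
  unfolding kernel_perfect_def
proof (intro allI impI)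
  fix Y assume Y: "Y \<subseteq> X1 \<union> X2"
  obtain S1 where S1: "is_kernel_of D1 (Y \<inter> X1) S1"
    using kp1 inf_le2 unfolding kernel_perfect_def by blast
  define Z where "Z = Y \<inter> X2 - (if S1 \<inter> C1 = {} then {} else C2)"
  have "Z \<subseteq> X2" unfolding Z_def by auto
  then obtain S2 where S2: "is_kernel_of D2 Z S2"
    using kp2 unfolding kernel_perfect_def by blast
  have S1_props: "S1 \<subseteq> Y \<inter> X1" "\<forall>x\<in>S1. \<forall>y\<in>S1. (x, y) \<notin> D1"
      "\<forall>x\<in>Y \<inter> X1 - S1. \<exists>y\<in>S1. (x, y) \<in> D1"
    using S1 unfolding is_kernel_of_def by auto
  have S2_props: "S2 \<subseteq> Z" "\<forall>x\<in>S2. \<forall>y\<in>S2. (x, y) \<notin> D2"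
      "\<forall>x\<in>Z - S2. \<exists>y\<in>S2. (x, y) \<in> D2"
    using S2 unfolding is_kernel_of_def by auto
  have independent: "(x, y) \<notin> D1 \<union> D2 \<union> C2 \<times> C1" if "x \<in> S1 \<union> S2" "y \<in> S1 \<union> S2" for x y
    using that S1_props(1,2) S2_props(1,2) D1 D2 disj C1 C2 unfolding Z_def
    by (auto split: if_splits)
  have absorbing: "\<exists>y\<in>S1 \<union> S2. (x, y) \<in> D1 \<union> D2 \<union> C2 \<times> C1" if "x \<in> Y - (S1 \<union> S2)" for x
  proof (cases "x \<in> X1")
    case True
    then show ?thesis using that S1_props(3) by blast
  next
    case False
    show ?thesis
    proof (cases "x \<in> Z")
      case True
      then show ?thesis using that S2_props(3) by blast
    next
      case False
      with \<open>x \<notin> X1\<close> that Y obtain s where "s \<in> S1 \<inter> C1" "x \<in> C2"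
        unfolding Z_def by (auto split: if_splits)
      then show ?thesis by blast
    qed
  qed
  have "is_kernel_of (D1 \<union> D2 \<union> C2 \<times> C1) Y (S1 \<union> S2)"
    unfolding is_kernel_of_def using S1_props(1) S2_props(1) independent absorbing
    unfolding Z_def by blast
  then show "\<exists>S. is_kernel_of (D1 \<union> D2 \<union> C2 \<times> C1) Y S" ..
qed

lemma out_degree_join_left:
  assumes "D1 \<subseteq> X1 \<times> X1" "D2 \<subseteq> X2 \<times> X2" "X1 \<inter> X2 = {}" "C2 \<subseteq> X2" "u \<in> X1"
  shows "out_degree (D1 \<union> D2 \<union> C2 \<times> C1) u = out_degree D1 u"
proof -
  have "{w. (u, w) \<in> D1 \<union> D2 \<union> C2 \<times> C1} = {w. (u, w) \<in> D1}"
    using assms by auto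
  then show ?thesis unfolding out_degree_def by simp
qed

lemma out_degree_join_right:
  assumes "finite X2" "finite C1" "D1 \<subseteq> X1 \<times> X1" "D2 \<subseteq> X2 \<times> X2" "u \<notin> X1"
  shows "out_degree (D1 \<union> D2 \<union> C2 \<times> C1) u
           \<le> out_degree D2 u + (if u \<in> C2 then card C1 else 0)"
proof -
  have succ: "{w. (u, w) \<in> D1 \<union> D2 \<union> C2 \<times> C1}
                = {w. (u, w) \<in> D2} \<union> (if u \<in> C2 then C1 else {})"
    using assms(3,5) by auto
  have "finite {w. (u, w) \<in> D2}"
    using assms(1,4) by (auto intro: finite_subset)
  then have "card ({w. (u, w) \<in> D2} \<union> (if u \<in> C2 then C1 else {}))
               \<le> card {w. (u, w) \<in> D2} + (if u \<in> C2 then card C1 else 0)"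
    by (simp add: card_Un_le)
  then show ?thesis unfolding out_degree_def succ .
qed

lemma line_adj_orientation_join:
  assumes o1: "is_orientation E1 (line_adj E1) D1" and o2: "is_orientation E2 (line_adj E2) D2"
    and cross: "\<forall>u\<in>E1. \<forall>w\<in>E2. u \<inter> w \<subseteq> {c}" and disj: "E1 \<inter> E2 = {}"
  shows "is_orientation (E1 \<union> E2) (line_adj (E1 \<union> E2))
           (D1 \<union> D2 \<union> {w\<in>E2. c \<in> w} \<times> {u\<in>E1. c \<in> u})"
    (is "is_orientation ?E ?adj ?D")
proof -
  have adj1: "line_adj E1 u w \<longleftrightarrow> ?adj u w" if "u \<in> E1" "w \<in> E1" for u w
    using that unfolding line_adj_def by auto
  have adj2: "line_adj E2 u w \<longleftrightarrow> ?adj u w" if "u \<in> E2" "w \<in> E2" for u w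
    using that unfolding line_adj_def by auto
  have meet_at_c: "c \<in> u \<and> c \<in> w" if "u \<in> E1" "w \<in> E2" "u \<inter> w \<noteq> {}" for u w
    using cross that by blast
  have arcs: "u \<in> ?E \<and> w \<in> ?E \<and> ?adj u w" if "(u, w) \<in> ?D" for u w
    using that o1 o2 disj adj1 adj2 unfolding is_orientation_def
    by (auto simp: line_adj_def)
  have edges: "(u, w) \<in> ?D \<or> (w, u) \<in> ?D" if uw: "u \<in> ?E" "w \<in> ?E" and adj: "?adj u w" for u w
  proof -
    consider "u \<in> E1" "w \<in> E1" | "u \<in> E2" "w \<in> E2" | "u \<in> E1" "w \<in> E2" | "u \<in> E2" "w \<in> E1"
      using uw by blast
    then show ?thesis
    proof cases
      case 1
      then show ?thesis using o1 adj1 adj unfolding is_orientation_def by blast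
    next
      case 2
      then show ?thesis using o2 adj2 adj unfolding is_orientation_def by blast
    next
      case 3
      then show ?thesis using meet_at_c adj unfolding line_adj_def by blast
    next
      case 4
      then show ?thesis using meet_at_c[of w u] adj unfolding line_adj_def by blast
    qed
  qed
  show ?thesis
    unfolding is_orientation_def using arcs edges by blast
qed

lemma degree_Un_disjoint:
  assumes "finite E1" "finite E2" "E1 \<inter> E2 = {}"
  shows "degree (E1 \<union> E2) x = degree E1 x + degree E2 x"
proof -
  have "{e \<in> E1 \<union> E2. x \<in> e} = {e\<in>E1. x \<in> e} \<union> {e\<in>E2. x \<in> e}" by auto
  then show ?thesis
    unfolding degree_def using assms by (simp add: card_Un_disjoint disjoint_iff)
qed

lemma f_edge_orientable_join:
  assumes fin: "finite E1" "finite E2"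
    and cross: "\<forall>u\<in>E1. \<forall>w\<in>E2. u \<inter> w \<subseteq> {c}" and disj: "E1 \<inter> E2 = {}"
    and deg_c: "degree (E1 \<union> E2) c \<le> k"
    and v: "\<forall>w\<in>E2. v \<in> w \<longrightarrow> v = c"
    and o1: "f_edge_orientable E1 (f_kv E1 k v)" and o2: "f_edge_orientable E2 (f_kv E2 k c)"
  shows "f_edge_orientable (E1 \<union> E2) (f_kv (E1 \<union> E2) k v)"
proof -
  obtain D1 where D1: "f_kernel_perfect_orientation E1 (line_adj E1) (f_kv E1 k v) D1"
    using o1 unfolding f_edge_orientable_def by blast
  obtain D2 where D2: "f_kernel_perfect_orientation E2 (line_adj E2) (f_kv E2 k c) D2"
    using o2 unfolding f_edge_orientable_def by blast
  define C1 where "C1 = {u\<in>E1. c \<in> u}"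
  define C2 where "C2 = {w\<in>E2. c \<in> w}"
  define D where "D = D1 \<union> D2 \<union> C2 \<times> C1"
  have orient1: "is_orientation E1 (line_adj E1) D1" and kp1: "kernel_perfect E1 D1"
    and bound1: "\<forall>u\<in>E1. f_kv E1 k v u \<ge> 1 + out_degree D1 u"
    using D1 unfolding f_kernel_perfect_orientation_def by auto
  have orient2: "is_orientation E2 (line_adj E2) D2" and kp2: "kernel_perfect E2 D2"
    and bound2: "\<forall>u\<in>E2. f_kv E2 k c u \<ge> 1 + out_degree D2 u"
    using D2 unfolding f_kernel_perfect_orientation_def by auto
  have D1_sub: "D1 \<subseteq> E1 \<times> E1" and D2_sub: "D2 \<subseteq> E2 \<times> E2"
    using orient1 orient2 unfolding is_orientation_def by auto
  have deg: "degree (E1 \<union> E2) x = degree E1 x + degree E2 x" for x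
    using degree_Un_disjoint[OF fin disj] .
  have "is_orientation (E1 \<union> E2) (line_adj (E1 \<union> E2)) D"
    unfolding D_def C1_def C2_def using line_adj_orientation_join[OF orient1 orient2 cross disj] .
  moreover have "kernel_perfect (E1 \<union> E2) D"
    unfolding D_def by (rule kernel_perfect_join[OF kp1 kp2 D1_sub D2_sub disj])
      (auto simp: C1_def C2_def)
  moreover have "f_kv (E1 \<union> E2) k v u \<ge> 1 + out_degree D u" if u: "u \<in> E1 \<union> E2" for u
  proof (cases "u \<in> E1")
    case True
    have "out_degree D u = out_degree D1 u"
      unfolding D_def by (rule out_degree_join_left[OF D1_sub D2_sub disj _ True]) (auto simp: C2_def)
    moreover have "f_kv E1 k v u \<le> f_kv (E1 \<union> E2) k v u"
      using deg[of v] unfolding f_kv_def by auto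
    ultimately show ?thesis using bound1 True by fastforce
  next
    case False
    with u have u2: "u \<in> E2" by blast
    have out: "out_degree D u \<le> out_degree D2 u + (if u \<in> C2 then card C1 else 0)"
      unfolding D_def by (rule out_degree_join_right[OF fin(2) _ D1_sub D2_sub False])
        (use fin(1) in \<open>simp add: C1_def\<close>)
    have bound: "1 + out_degree D2 u \<le> f_kv E2 k c u" using bound2 u2 by blast
    show ?thesis
    proof (cases "c \<in> u")
      case True
      have "card C1 = degree E1 c" unfolding C1_def degree_def ..
      moreover have "degree (E1 \<union> E2) c \<le> f_kv (E1 \<union> E2) k v u"
        using deg_c v u2 unfolding f_kv_def by auto
      ultimately show ?thesis
        using out bound True u2 deg[of c] unfolding C2_def f_kv_def by simp
    next
      case False
      with v u2 have "v \<notin> u" by blast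
      then show ?thesis using out bound False unfolding C2_def f_kv_def by simp
    qed
  qed
  ultimately show ?thesis
    unfolding f_edge_orientable_def f_kernel_perfect_orientation_def by blast
qed

section \<open>Separations at a vertex\<close>

definition one_separation :: "'a set \<Rightarrow> 'a set set \<Rightarrow> 'a set \<Rightarrow> 'a set \<Rightarrow> 'a \<Rightarrow> bool" where
  "one_separation V E V1 V2 c \<longleftrightarrow> V = V1 \<union> V2 \<and> V1 \<inter> V2 \<subseteq> {c} \<and> (\<forall>e\<in>E. e \<subseteq> V1 \<or> e \<subseteq> V2)"

lemma one_separation_swap: "one_separation V E V1 V2 c \<Longrightarrow> one_separation V E V2 V1 c"
  unfolding one_separation_def by blast

lemma one_separation_at_vertex_of_side:
  assumes "one_separation V E V1 V2 c" "V2 \<noteq> {}"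
  obtains c' where "c' \<in> V2" "one_separation V E V1 V2 c'"
  using assms that unfolding one_separation_def by (cases "V1 \<inter> V2 = {}") blast+

lemma simple_graph_finite_edges: "simple_graph V E \<Longrightarrow> finite E"
  unfolding simple_graph_def by (auto intro: finite_subset[of E "Pow V"])

lemma simple_graph_edge_not_subset_singleton:
  assumes "simple_graph V E" "e \<in> E"
  shows "\<not> e \<subseteq> {c}"
proof
  assume "e \<subseteq> {c}"
  then have "card e \<le> 1" using card_mono[of "{c}" e] by simp
  with assms show False unfolding simple_graph_def by auto
qed

lemma simple_graph_side:
  "simple_graph V E \<Longrightarrow> W \<subseteq> V \<Longrightarrow> simple_graph W {e\<in>E. e \<subseteq> W}"
  unfolding simple_graph_def by (auto intro: finite_subset)

lemma max_degree_le_side: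
  assumes "simple_graph V E" "max_degree_le V E k" "W \<subseteq> V"
  shows "max_degree_le W {e\<in>E. e \<subseteq> W} k"
  unfolding max_degree_le_def
proof
  fix x assume "x \<in> W"
  have "degree {e\<in>E. e \<subseteq> W} x \<le> degree E x"
    unfolding degree_def using simple_graph_finite_edges[OF assms(1)] by (auto intro: card_mono)
  also have "\<dots> \<le> k" using assms(2,3) \<open>x \<in> W\<close> unfolding max_degree_le_def by auto
  finally show "degree {e\<in>E. e \<subseteq> W} x \<le> k" .
qed

lemma f_edge_orientable_of_one_separation:
  assumes sg: "simple_graph V E" and md: "max_degree_le V E k"
    and sep: "one_separation V E V1 V2 c" and c: "c \<in> V2" and v: "v \<in> V1"
    and s1: "strongly_k_edge_orientable V1 {e\<in>E. e \<subseteq> V1} k"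
    and s2: "strongly_k_edge_orientable V2 {e\<in>E. e \<subseteq> V2} k"
  shows "f_edge_orientable E (f_kv E k v)"
proof -
  define E1 where "E1 = {e\<in>E. e \<subseteq> V1}"
  define E2 where "E2 = {e\<in>E. e \<subseteq> V2}"
  have V: "V = V1 \<union> V2" and meet: "V1 \<inter> V2 \<subseteq> {c}" and edges: "\<forall>e\<in>E. e \<subseteq> V1 \<or> e \<subseteq> V2"
    using sep unfolding one_separation_def by auto
  have split: "E = E1 \<union> E2" using edges unfolding E1_def E2_def by auto
  have cross: "\<forall>u\<in>E1. \<forall>w\<in>E2. u \<inter> w \<subseteq> {c}"
    using meet unfolding E1_def E2_def by auto
  have disj: "E1 \<inter> E2 = {}"
  proof -
    have "\<not> e \<subseteq> {c}" if "e \<in> E" for e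
      using simple_graph_edge_not_subset_singleton[OF sg that] .
    then show ?thesis using meet unfolding E1_def E2_def by auto
  qed
  have "degree E c \<le> k" using md c V unfolding max_degree_le_def by auto
  moreover have "\<forall>w\<in>E2. v \<in> w \<longrightarrow> v = c" using meet v unfolding E2_def by auto
  moreover have "f_edge_orientable E1 (f_kv E1 k v)"
    using s1 v unfolding strongly_k_edge_orientable_def E1_def by blast
  moreover have "f_edge_orientable E2 (f_kv E2 k c)"
    using s2 c unfolding strongly_k_edge_orientable_def E2_def by blast
  moreover have "finite E1" "finite E2"
    using simple_graph_finite_edges[OF sg] unfolding E1_def E2_def by auto
  ultimately show ?thesis
    using f_edge_orientable_join[OF _ _ cross disj] unfolding split by blast
qed

lemma strongly_k_edge_orientable_of_one_separation:
  assumes sg: "simple_graph V E" and md: "max_degree_le V E k"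
    and sep: "one_separation V E V1 V2 c" and proper: "V1 \<noteq> V" "V2 \<noteq> V"
    and s1: "strongly_k_edge_orientable V1 {e\<in>E. e \<subseteq> V1} k"
    and s2: "strongly_k_edge_orientable V2 {e\<in>E. e \<subseteq> V2} k"
  shows "strongly_k_edge_orientable V E k"
  unfolding strongly_k_edge_orientable_def
proof
  fix v assume "v \<in> V"
  then consider "v \<in> V1" | "v \<in> V2" using sep unfolding one_separation_def by blast
  then show "f_edge_orientable E (f_kv E k v)"
  proof cases
    case 1
    have "V2 \<noteq> {}" using sep proper unfolding one_separation_def by auto
    with sep obtain c' where "c' \<in> V2" "one_separation V E V1 V2 c'"
      by (rule one_separation_at_vertex_of_side)
    then show ?thesis by (intro f_edge_orientable_of_one_separation[OF sg md _ _ 1 s1 s2])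
  next
    case 2
    have sep': "one_separation V E V2 V1 c" using sep by (rule one_separation_swap)
    have "V1 \<noteq> {}" using sep proper unfolding one_separation_def by auto
    with sep' obtain c' where "c' \<in> V1" "one_separation V E V2 V1 c'"
      by (rule one_separation_at_vertex_of_side)
    then show ?thesis by (intro f_edge_orientable_of_one_separation[OF sg md _ _ 2 s2 s1])
  qed
qed

lemma disconnected_graph_split:
  assumes edges: "\<forall>e\<in>F. e \<subseteq> W \<and> card e = 2" and ne: "W \<noteq> {}"
    and disconn: "\<not> connected_graph W F"
  obtains C where "C \<subseteq> W" "C \<noteq> {}" "C \<noteq> W" "\<forall>e\<in>F. e \<subseteq> C \<or> e \<subseteq> W - C"
proof -
  define R where "R = (\<lambda>a b. a \<in> W \<and> b \<in> W \<and> {a, b} \<in> F)"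
  obtain x y where xy: "x \<in> W" "y \<in> W" "\<not> R\<^sup>*\<^sup>* x y"
    using ne disconn unfolding connected_graph_def R_def by blast
  define C where "C = {z\<in>W. R\<^sup>*\<^sup>* x z}"
  have sides: "e \<subseteq> C \<or> e \<subseteq> W - C" if e: "e \<in> F" for e
  proof -
    obtain a b where ab: "e = {a, b}" using edges e by (auto simp: card_2_iff)
    have "a \<in> W" "b \<in> W" using ab edges e by auto
    moreover have "R a b" "R b a" using ab edges e unfolding R_def by (auto simp: insert_commute)
    ultimately have "a \<in> C \<longleftrightarrow> b \<in> C"
      unfolding C_def
      using rtranclp.rtrancl_into_rtrancl[of R x a b] rtranclp.rtrancl_into_rtrancl[of R x b a]
      by blast
    then show ?thesis using ab edges e by auto
  qed
  have "x \<in> C" "y \<notin> C" using xy unfolding C_def by auto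
  moreover have "C \<subseteq> W" unfolding C_def by blast
  ultimately show ?thesis using that[of C] sides xy(2) by blast
qed

lemma one_separation_exists:
  assumes sg: "simple_graph V E" and ne: "V \<noteq> {}"
    and not_block: "\<not> (connected_graph V E \<and> no_cut_vertex V E)"
  obtains V1 V2 c where "one_separation V E V1 V2 c" "V1 \<noteq> V" "V2 \<noteq> V"
proof (cases "connected_graph V E")
  case False
  have "\<forall>e\<in>E. e \<subseteq> V \<and> card e = 2" using sg unfolding simple_graph_def by blast
  then obtain C where C: "C \<subseteq> V" "C \<noteq> {}" "C \<noteq> V" "\<forall>e\<in>E. e \<subseteq> C \<or> e \<subseteq> V - C"
    using ne False by (rule disconnected_graph_split)
  obtain c where "c \<in> V" using ne by blast
  show ?thesis
  proof (rule that[of C "V - C" c])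
    show "one_separation V E C (V - C) c" using C(1,4) unfolding one_separation_def by auto
  qed (use C(1-3) in blast)+
next
  case True
  with not_block obtain c where c: "c \<in> V" "V - {c} \<noteq> {}"
      "\<not> connected_graph (V - {c}) {e\<in>E. c \<notin> e}"
    unfolding no_cut_vertex_def by blast
  have "\<forall>e\<in>{e\<in>E. c \<notin> e}. e \<subseteq> V - {c} \<and> card e = 2"
    using sg unfolding simple_graph_def by blast
  then obtain C where C: "C \<subseteq> V - {c}" "C \<noteq> {}" "C \<noteq> V - {c}"
      "\<forall>e\<in>{e\<in>E. c \<notin> e}. e \<subseteq> C \<or> e \<subseteq> V - {c} - C"
    using c(2,3) by (rule disconnected_graph_split)
  have sides: "e \<subseteq> insert c C \<or> e \<subseteq> V - C" if e: "e \<in> E" for e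
  proof (cases "c \<in> e")
    case True
    obtain a b where "e = {a, b}" using sg e unfolding simple_graph_def by (meson card_2_iff)
    moreover have "e \<subseteq> V" using sg e unfolding simple_graph_def by blast
    ultimately show ?thesis using True C(1) c(1) by auto
  next
    case False
    then show ?thesis using C(4) e by blast
  qed
  show ?thesis
  proof (rule that[of "insert c C" "V - C" c])
    show "one_separation V E (insert c C) (V - C) c"
      using C(1) c(1) sides unfolding one_separation_def by auto
  qed (use C(1-3) in blast)+
qed

section \<open>Blocks of the sides of a separation\<close>

lemma reachable_avoiding_separator_in_side:
  assumes "(\<lambda>a b. a \<in> P \<and> b \<in> P \<and> {a, b} \<in> F)\<^sup>*\<^sup>* x z" and "x \<in> V1"
    and "P \<inter> V1 \<inter> V2 = {}" and "\<forall>e\<in>F. e \<subseteq> V1 \<or> e \<subseteq> V2"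
  shows "z \<in> V1"
  using assms(1)
proof (induction rule: rtranclp_induct)
  case base
  then show ?case using assms(2) by simp
next
  case (step y z)
  then have "y \<notin> V2" using assms(3) by blast
  moreover have "{y, z} \<subseteq> V1 \<or> {y, z} \<subseteq> V2" using step assms(4) by blast
  ultimately show ?case by blast
qed

text \<open>A walk in H from one side to the other passes through c; if c lies in H, walk in H - c.\<close>

lemma connected_no_cut_vertex_within_side:
  assumes sub: "subgraph H EH V E" and conn: "connected_graph H EH" and nocut: "no_cut_vertex H EH"
    and sep: "one_separation V E V1 V2 c"
  shows "H \<subseteq> V1 \<or> H \<subseteq> V2"
proof (rule ccontr)
  assume "\<not> (H \<subseteq> V1 \<or> H \<subseteq> V2)"
  then obtain x y where x: "x \<in> H" "x \<notin> V2" and y: "y \<in> H" "y \<notin> V1" by blast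
  have H: "H \<subseteq> V" "EH \<subseteq> E" using sub unfolding subgraph_def by auto
  have V: "V = V1 \<union> V2" and meet: "V1 \<inter> V2 \<subseteq> {c}" and edges: "\<forall>e\<in>EH. e \<subseteq> V1 \<or> e \<subseteq> V2"
    using sep H(2) unfolding one_separation_def by auto
  have x1: "x \<in> V1" using x H(1) V by blast
  show False
  proof (cases "c \<in> H \<and> c \<in> V1 \<and> c \<in> V2")
    case True
    have xy: "x \<in> H - {c}" "y \<in> H - {c}" using x y True by auto
    have "H - {c} = {} \<or> connected_graph (H - {c}) {e\<in>EH. c \<notin> e}"
      using nocut True unfolding no_cut_vertex_def by simp
    with xy have "connected_graph (H - {c}) {e\<in>EH. c \<notin> e}" by blast
    with xy have "(\<lambda>a b. a \<in> H - {c} \<and> b \<in> H - {c} \<and> {a, b} \<in> {e\<in>EH. c \<notin> e})\<^sup>*\<^sup>* x y"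
      unfolding connected_graph_def by blast
    moreover have "(H - {c}) \<inter> V1 \<inter> V2 = {}" using meet by auto
    moreover have "\<forall>e\<in>{e\<in>EH. c \<notin> e}. e \<subseteq> V1 \<or> e \<subseteq> V2" using edges by simp
    ultimately have "y \<in> V1" by (rule reachable_avoiding_separator_in_side[OF _ x1])
    with y show False by simp
  next
    case False
    have "(\<lambda>a b. a \<in> H \<and> b \<in> H \<and> {a, b} \<in> EH)\<^sup>*\<^sup>* x y"
      using conn x y unfolding connected_graph_def by blast
    moreover have "H \<inter> V1 \<inter> V2 = {}" using meet False by auto
    ultimately have "y \<in> V1" using edges by (rule reachable_avoiding_separator_in_side[OF _ x1])
    with y show False by simp
  qed
qed

lemma is_block_of_side:
  assumes sg: "simple_graph V E" and sep: "one_separation V E V1 V2 c"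
    and block: "is_block V1 {e\<in>E. e \<subseteq> V1} B EB" and edge: "EB \<noteq> {}"
  shows "is_block V E B EB"
proof -
  have sub: "subgraph B EB V1 {e\<in>E. e \<subseteq> V1}" and conn: "connected_graph B EB"
    and nocut: "no_cut_vertex B EB"
    and maximal: "\<And>B' EB'. subgraph B' EB' V1 {e\<in>E. e \<subseteq> V1} \<Longrightarrow> B \<subseteq> B' \<Longrightarrow> EB \<subseteq> EB'
      \<Longrightarrow> connected_graph B' EB' \<Longrightarrow> no_cut_vertex B' EB' \<Longrightarrow> B' = B \<and> EB' = EB"
    using block unfolding is_block_def by blast+
  have V: "V = V1 \<union> V2" and meet: "V1 \<inter> V2 \<subseteq> {c}"
    using sep unfolding one_separation_def by auto
  have "B' = B \<and> EB' = EB"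
    if sub': "subgraph B' EB' V E" and BB': "B \<subseteq> B'" "EB \<subseteq> EB'"
      and conn': "connected_graph B' EB'" and nocut': "no_cut_vertex B' EB'" for B' EB'
  proof -
    have "\<not> B' \<subseteq> V2"
    proof
      assume "B' \<subseteq> V2"
      obtain e where e: "e \<in> EB" using edge by blast
      then have "e \<in> E" "e \<subseteq> V1 \<inter> V2"
        using sub BB'(1) \<open>B' \<subseteq> V2\<close> unfolding subgraph_def by blast+
      with meet show False using simple_graph_edge_not_subset_singleton[OF sg] by blast
    qed
    then have "B' \<subseteq> V1"
      using connected_no_cut_vertex_within_side[OF sub' conn' nocut' sep] by blast
    then have "subgraph B' EB' V1 {e\<in>E. e \<subseteq> V1}"
      using sub' unfolding subgraph_def by blast
    then show ?thesis using maximal BB' conn' nocut' by blast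
  qed
  moreover have "subgraph B EB V E" using sub V unfolding subgraph_def by auto
  ultimately show ?thesis using conn nocut unfolding is_block_def by blast
qed

lemma is_block_self:
  "simple_graph V E \<Longrightarrow> connected_graph V E \<Longrightarrow> no_cut_vertex V E \<Longrightarrow> is_block V E V E"
  unfolding is_block_def subgraph_def simple_graph_def by auto

lemma strongly_k_edge_orientable_no_edges: "strongly_k_edge_orientable B {} k"
  unfolding strongly_k_edge_orientable_def f_edge_orientable_def
    f_kernel_perfect_orientation_def is_orientation_def kernel_perfect_def is_kernel_of_def
  by (auto simp: line_adj_def)

lemma blocks_of_side_strongly_k_edge_orientable:
  assumes sg: "simple_graph V E" and sep: "one_separation V E V1 V2 c"
    and blocks: "\<forall>B EB. is_block V E B EB \<longrightarrow> strongly_k_edge_orientable B EB k"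
  shows "\<forall>B EB. is_block V1 {e\<in>E. e \<subseteq> V1} B EB \<longrightarrow> strongly_k_edge_orientable B EB k"
proof (intro allI impI)
  fix B EB assume block: "is_block V1 {e\<in>E. e \<subseteq> V1} B EB"
  \<comment> \<open>an edgeless block of a side, i.e. an isolated vertex there, need not be a block of G\<close>
  show "strongly_k_edge_orientable B EB k"
  proof (cases "EB = {}")
    case True
    then show ?thesis using strongly_k_edge_orientable_no_edges by simp
  next
    case False
    then show ?thesis using blocks is_block_of_side[OF sg sep block] by blast
  qed
qed

theorem mainTheorem12:
  fixes V :: "'a set" and E :: "'a set set" and k :: nat
  assumes "simple_graph V E"
    and "max_degree_le V E k"
    and "\<forall>B EB. is_block V E B EB \<longrightarrow> strongly_k_edge_orientable B EB k"
  shows "strongly_k_edge_orientable V E k"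
  using assms
proof (induction "card V" arbitrary: V E rule: less_induct)
  case less
  note sg = less.prems(1) and md = less.prems(2) and blocks = less.prems(3)
  show ?case
  proof (cases "V = {} \<or> connected_graph V E \<and> no_cut_vertex V E")
    case True
    then show ?thesis
      using blocks is_block_self[OF sg] unfolding strongly_k_edge_orientable_def by blast
  next
    case False
    then obtain V1 V2 c where sep: "one_separation V E V1 V2 c" and proper: "V1 \<noteq> V" "V2 \<noteq> V"
      using one_separation_exists[OF sg] by blast
    have side: "strongly_k_edge_orientable W {e\<in>E. e \<subseteq> W} k"
      if sepW: "one_separation V E W W' c" and "W \<noteq> V" for W W'
    proof (rule less.hyps)
      have "W \<subseteq> V" using sepW unfolding one_separation_def by blast
      with \<open>W \<noteq> V\<close> show "card W < card V"
        using sg unfolding simple_graph_def by (simp add: psubset_card_mono)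
      show "simple_graph W {e\<in>E. e \<subseteq> W}" using sg \<open>W \<subseteq> V\<close> by (rule simple_graph_side)
      show "max_degree_le W {e\<in>E. e \<subseteq> W} k" using sg md \<open>W \<subseteq> V\<close> by (rule max_degree_le_side)
      show "\<forall>B EB. is_block W {e\<in>E. e \<subseteq> W} B EB \<longrightarrow> strongly_k_edge_orientable B EB k"
        using sg sepW blocks by (rule blocks_of_side_strongly_k_edge_orientable)
    qed
    show ?thesis
      using strongly_k_edge_orientable_of_one_separation[OF sg md sep proper]
        side[OF sep proper(1)] side[OF one_separation_swap[OF sep] proper(2)] by blast
  qed
qed

end
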